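(* Let $G=(V,E)$ be a graph with $E=\{e_1,\dots,e_m\}$, let $t\le\lfloor m/2\rfloor$, and let $D=(E,A)$ be the digraph with $A=\{(e_i,e_{i+t}) : i\in\{1,\dots,t\}\}$. Let $\ell,u$ be such that $\ell(e)=u(e)=|\mathrm{dep}(e)|\in\{0,1\}$ for every $e\in E$. Let $S=\{e_i: i\in\{t+1,\dots,2t\}\}$, let $C_1,\dots,C_k$ be the connected components of $G-S$, and let $H$ be the multigraph with vertex set $\{C_1,\dots,C_k\}$ having, for each edge $e\in S$ whose endpoints lie in distinct components $C_i\neq C_j$, one edge between $C_i$ and $C_j$ (edges of $S$ with both endpoints in the same component are discarded). For $S'\subseteq S$, let $H(S')$ be the spanning sub-multigraph of $H$ (vertex set $\{C_1,\dots,C_k\}$) consisting of the edges corresponding to elements of $S'$. If there exists $S'\subseteq S$ such that $H(S')$ is a spanning tree of $H$ and the graph $(V,\mathrm{dep}(S'))$ is acyclic, then $G$ has a spanning tree that $(\ell,u)$-satisfies $D$. Conversely, the edge set of any spanning tree of $G$ that $(\ell,u)$-satisfies $D$ contains such a subset $S'$.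
   Context: For $e\in E$, $\mathrm{dep}(e)=\{e'\in E:(e',e)\in A\}$, and for $E'\subseteq E$, $\mathrm{dep}(E')=\bigcup_{e\in E'}\mathrm{dep}(e)$. A subgraph $T$ of $G$ $(\ell,u)$-satisfies $D$ if $\ell(e)\le|\mathrm{dep}(e)\cap E(T)|\le u(e)$ for every $e\in E(T)$. *)

theory Defs
  imports Main
begin

(* Multigraph given by vertex set W, edge identifiers I, endpoint map ends
   (ends i = set of the two endpoints). A simple graph is the case where edges
   are 2-element vertex sets and ends = id. *)

definition mg_adj :: "'i set \<Rightarrow> ('i \<Rightarrow> 'w set) \<Rightarrow> 'w \<Rightarrow> 'w \<Rightarrow> bool" where
  "mg_adj I ends a b \<longleftrightarrow> (\<exists>i\<in>I. ends i = {a, b})"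

definition mg_connected :: "'w set \<Rightarrow> 'i set \<Rightarrow> ('i \<Rightarrow> 'w set) \<Rightarrow> bool" where
  "mg_connected W I ends \<longleftrightarrow> (\<forall>x\<in>W. \<forall>y\<in>W. (mg_adj I ends)\<^sup>*\<^sup>* x y)"

definition mg_is_cycle :: "'i set \<Rightarrow> ('i \<Rightarrow> 'w set) \<Rightarrow> 'w list \<Rightarrow> 'i list \<Rightarrow> bool" where
  "mg_is_cycle I ends vs es \<longleftrightarrow>
     length vs = length es \<and> length es \<ge> 2 \<and> distinct vs \<and> distinct es \<and> set es \<subseteq> I \<and>
     (\<forall>j<length es. ends (es ! j) = {vs ! j, vs ! ((j + 1) mod length vs)})"

definition mg_acyclic :: "'i set \<Rightarrow> ('i \<Rightarrow> 'w set) \<Rightarrow> bool" where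
  "mg_acyclic I ends \<longleftrightarrow> \<not> (\<exists>vs es. mg_is_cycle I ends vs es)"

definition mg_spanning_tree :: "'w set \<Rightarrow> 'i set \<Rightarrow> ('i \<Rightarrow> 'w set) \<Rightarrow> 'i set \<Rightarrow> bool" where
  "mg_spanning_tree W I ends J \<longleftrightarrow> J \<subseteq> I \<and> mg_connected W J ends \<and> mg_acyclic J ends"

definition dep :: "('e \<times> 'e) set \<Rightarrow> 'e \<Rightarrow> 'e set" where
  "dep A x = {y. (y, x) \<in> A}"

definition dep_set :: "('e \<times> 'e) set \<Rightarrow> 'e set \<Rightarrow> 'e set" where
  "dep_set A X = (\<Union>x\<in>X. dep A x)"

definition lu_satisfies :: "('e \<Rightarrow> nat) \<Rightarrow> ('e \<Rightarrow> nat) \<Rightarrow> ('e \<times> 'e) set \<Rightarrow> 'e set \<Rightarrow> bool" where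
  "lu_satisfies l u A F \<longleftrightarrow>
     (\<forall>x\<in>F. l x \<le> card (dep A x \<inter> F) \<and> card (dep A x \<inter> F) \<le> u x)"

definition component :: "'v set \<Rightarrow> 'v set set \<Rightarrow> 'v \<Rightarrow> 'v set" where
  "component V F x = {y\<in>V. (mg_adj F id)\<^sup>*\<^sup>* x y}"

end

(* Every arc of D runs from an edge outside S to an edge of S, and l = u = |dep|, so a spanning
   tree F of G satisfies D exactly when dep(F) is contained in F. Let c map each vertex to its component in G - S.

   If F is such a tree, its edges in S connect H after contraction by c, so they contain a spanning
   tree S' of H, and dep(S') lies in the acyclic F.

   Conversely, given S', the edges of S' together with dep(S') form a forest of G: a cycle through
   an edge f of S' leaves the endpoints of f connected without f, and this connection projects to
   a path of H(S') avoiding f between the two distinct components joined by f; a cycle inside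
   dep(S') is excluded by hypothesis. As H(S') connects H, the forest extends by edges of G - S to
   a spanning tree of G, whose edges in S are those of S' and are therefore closed under dep. *)

theory Submission
  imports Defs "HOL-Library.Transitive_Closure_Table"
begin

lemma symp_mg_adj: "symp (mg_adj I ends)"
  by (auto intro!: sympI simp: mg_adj_def insert_commute)

lemma mg_adj_rtranclp_sym: "(mg_adj I ends)\<^sup>*\<^sup>* a b \<Longrightarrow> (mg_adj I ends)\<^sup>*\<^sup>* b a"
  by (rule sympD[OF symp_rtranclp[OF symp_mg_adj]])

lemma mg_adj_rtranclp_mono:
  assumes "I \<subseteq> I'" "(mg_adj I ends)\<^sup>*\<^sup>* a b"
  shows "(mg_adj I' ends)\<^sup>*\<^sup>* a b"
proof -
  have "mg_adj I ends \<le> mg_adj I' ends" using assms(1) by (fastforce simp: mg_adj_def)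
  then show ?thesis using assms(2) by (rule predicate2D[OF rtranclp_mono])
qed

lemma mg_is_cycle_edges_subset:
  "mg_is_cycle I ends vs es \<Longrightarrow> set es \<subseteq> I' \<Longrightarrow> mg_is_cycle I' ends vs es"
  unfolding mg_is_cycle_def by (elim conjE) (intro conjI)

lemma mg_acyclic_subset: "I \<subseteq> I' \<Longrightarrow> mg_acyclic I' ends \<Longrightarrow> mg_acyclic I ends"
  unfolding mg_acyclic_def mg_is_cycle_def by blast

lemma mg_acyclic_empty: "mg_acyclic {} ends"
  by (simp add: mg_acyclic_def mg_is_cycle_def)

lemma mg_is_cycle_bypass:
  assumes cyc: "mg_is_cycle I ends vs es" and j: "j < length es"
  shows "\<exists>a b. a \<noteq> b \<and> ends (es ! j) = {a, b} \<and> (mg_adj (I - {es ! j}) ends)\<^sup>*\<^sup>* a b"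
proof -
  define n where "n = length es"
  let ?R = "mg_adj (I - {es ! j}) ends"
  have lv: "length vs = n" and n2: "n \<ge> 2" and dvs: "distinct vs" and des: "distinct es"
    and sI: "set es \<subseteq> I" and en: "\<And>k. k < n \<Longrightarrow> ends (es ! k) = {vs ! k, vs ! ((k + 1) mod n)}"
    using cyc unfolding mg_is_cycle_def n_def by auto
  have jn: "j < n" using j n_def by simp
  have walk: "?R\<^sup>*\<^sup>* (vs ! ((j + 1) mod n)) (vs ! ((j + 1 + k) mod n))" if "k < n" for k
    using that
  proof (induction k)
    case 0
    then show ?case by simp
  next
    case (Suc k)
    define p where "p = (j + 1 + k) mod n"
    have pn: "p < n" using n2 p_def by simp
    have "p \<noteq> j" unfolding p_def using jn Suc.prems by (cases "j + Suc k < n") (auto simp: mod_if)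
    then have "es ! p \<noteq> es ! j" using des pn jn n_def by (simp add: nth_eq_iff_index_eq)
    moreover have "es ! p \<in> I" using sI pn n_def by auto
    moreover have "ends (es ! p) = {vs ! p, vs ! ((j + 1 + Suc k) mod n)}"
      using en[OF pn] by (simp add: p_def mod_Suc_eq)
    ultimately have "?R (vs ! p) (vs ! ((j + 1 + Suc k) mod n))" unfolding mg_adj_def by blast
    then show ?case using Suc p_def by (auto intro: rtranclp.rtrancl_into_rtrancl)
  qed
  have "(j + 1 + (n - 1)) mod n = j" using n2 jn by simp
  then have "?R\<^sup>*\<^sup>* (vs ! j) (vs ! ((j + 1) mod n))"
    using mg_adj_rtranclp_sym[OF walk[of "n - 1"]] n2 by simp
  moreover have "(j + 1) mod n \<noteq> j" "(j + 1) mod n < n"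
    using jn n2 by (cases "Suc j = n"; simp)+
  then have "vs ! j \<noteq> vs ! ((j + 1) mod n)" using dvs jn lv by (simp add: nth_eq_iff_index_eq)
  ultimately show ?thesis using en[OF jn] by blast
qed

lemma rtrancl_path_distinct_edges:
  assumes "rtrancl_path (mg_adj I ends) a ys b" "distinct (a # ys)"
  shows "\<exists>es. length es = length ys \<and> distinct es \<and> set es \<subseteq> I \<and>
           (\<forall>p<length ys. ends (es ! p) = {(a # ys) ! p, ys ! p})"
  using assms
proof (induction rule: rtrancl_path.induct)
  case (base x)
  then show ?case by simp
next
  case (step x y ys z)
  obtain es where es: "length es = length ys" "distinct es" "set es \<subseteq> I"
    "\<forall>p<length ys. ends (es ! p) = {(y # ys) ! p, ys ! p}"
    using step by auto
  obtain g where g: "g \<in> I" "ends g = {x, y}" using step.hyps(1) unfolding mg_adj_def by blast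
  have "g \<notin> set es"
  proof
    assume "g \<in> set es"
    then obtain p where "p < length ys" "es ! p = g" using es(1) by (auto simp: in_set_conv_nth)
    then have "x \<in> {(y # ys) ! p, ys ! p}" using es(4) g(2) by (metis insertI1)
    moreover have "{(y # ys) ! p, ys ! p} \<subseteq> set (y # ys)"
      using \<open>p < length ys\<close> nth_mem[of p "y # ys"] nth_mem[of p ys] by auto
    ultimately show False using step.prems by auto
  qed
  then have "length (g # es) = length (y # ys) \<and> distinct (g # es) \<and> set (g # es) \<subseteq> I \<and>
    (\<forall>p<length (y # ys). ends ((g # es) ! p) = {(x # y # ys) ! p, (y # ys) ! p})"
    using es g by (auto simp: nth_Cons split: nat.split)
  then show ?case by blast
qed

lemma not_mg_acyclic_if_bypass:
  assumes path: "(mg_adj (I - {i}) ends)\<^sup>*\<^sup>* a b" and ends_i: "ends i = {a, b}"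
    and "a \<noteq> b" and "i \<in> I"
  shows "\<not> mg_acyclic I ends"
proof -
  obtain ys where ys: "rtrancl_path (mg_adj (I - {i}) ends) a ys b" and dist: "distinct (a # ys)"
    using path by (metis rtranclp_eq_rtrancl_path rtrancl_path_distinct)
  have "ys \<noteq> []" using ys \<open>a \<noteq> b\<close> by (auto elim: rtrancl_path.cases)
  then have last_b: "(a # ys) ! length ys = b"
    using rtrancl_path_last[OF ys] by (simp add: last_conv_nth)
  obtain es where es: "length es = length ys" "distinct es" "set es \<subseteq> I - {i}"
    "\<forall>p<length ys. ends (es ! p) = {(a # ys) ! p, ys ! p}"
    using rtrancl_path_distinct_edges[OF ys dist] by blast
  have "mg_is_cycle I ends (a # ys) (es @ [i])"
    unfolding mg_is_cycle_def
  proof (intro conjI allI impI)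
    show "2 \<le> length (es @ [i])" using \<open>ys \<noteq> []\<close> es(1) by (cases ys) auto
    show "distinct (es @ [i])" "set (es @ [i]) \<subseteq> I" using es(2,3) \<open>i \<in> I\<close> by auto
  next
    fix k assume "k < length (es @ [i])"
    then consider "k < length ys" | "k = length ys" using es(1) by fastforce
    then show "ends ((es @ [i]) ! k) = {(a # ys) ! k, (a # ys) ! ((k + 1) mod length (a # ys))}"
    proof cases
      case 1
      then show ?thesis using es(1,4) by (simp add: nth_append)
    next
      case 2
      then show ?thesis using es(1) ends_i last_b by (simp add: nth_append insert_commute)
    qed
  qed (use es(1) dist in auto)
  then show ?thesis unfolding mg_acyclic_def by blast
qed

lemma mg_connected_Diff_bypassed:
  assumes "mg_connected W I ends" "ends i = {a, b}" "(mg_adj (I - {i}) ends)\<^sup>*\<^sup>* a b"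
  shows "mg_connected W (I - {i}) ends"
proof -
  have "(mg_adj (I - {i}) ends)\<^sup>*\<^sup>* x y" if adj: "mg_adj I ends x y" for x y
  proof -
    obtain k where k: "k \<in> I" "ends k = {x, y}" using adj unfolding mg_adj_def by blast
    show ?thesis
    proof (cases "k = i")
      case True
      then show ?thesis using k assms(2) assms(3) mg_adj_rtranclp_sym[OF assms(3)]
        by (auto simp: doubleton_eq_iff)
    next
      case False
      then show ?thesis using k unfolding mg_adj_def by blast
    qed
  qed
  then have "mg_adj I ends \<le> (mg_adj (I - {i}) ends)\<^sup>*\<^sup>*" by blast
  then have "(mg_adj I ends)\<^sup>*\<^sup>* \<le> (mg_adj (I - {i}) ends)\<^sup>*\<^sup>*"
    by (metis rtranclp_idemp rtranclp_mono)
  then show ?thesis using assms(1) unfolding mg_connected_def by blast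
qed

lemma mg_acyclic_extends_to_spanning_tree:
  assumes "finite I" "mg_connected W I ends" "F0 \<subseteq> I" "mg_acyclic F0 ends"
  shows "\<exists>J. F0 \<subseteq> J \<and> mg_spanning_tree W I ends J"
  using assms
proof (induction "card (I - F0)" arbitrary: I rule: less_induct)
  case less
  show ?case
  proof (cases "mg_acyclic I ends")
    case True
    then show ?thesis using less.prems unfolding mg_spanning_tree_def by blast
  next
    case False
    then obtain vs es where cyc: "mg_is_cycle I ends vs es" by (auto simp: mg_acyclic_def)
    have "\<not> set es \<subseteq> F0"
      using mg_is_cycle_edges_subset[OF cyc] less.prems(4) unfolding mg_acyclic_def by blast
    then obtain j where j: "j < length es" "es ! j \<notin> F0" by (metis in_set_conv_nth subsetI)
    moreover have "set es \<subseteq> I" using cyc unfolding mg_is_cycle_def by (elim conjE) assumption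
    moreover have "es ! j \<in> set es" using j(1) by (rule nth_mem)
    ultimately have "es ! j \<in> I - F0" by blast
    then have "card (I - F0 - {es ! j}) < card (I - F0)"
      using less.prems(1) by (meson card_Diff1_less finite_Diff)
    moreover have "I - {es ! j} - F0 = I - F0 - {es ! j}" by blast
    ultimately have smaller: "card (I - {es ! j} - F0) < card (I - F0)" by simp
    obtain a b where "ends (es ! j) = {a, b}" "(mg_adj (I - {es ! j}) ends)\<^sup>*\<^sup>* a b"
      using mg_is_cycle_bypass[OF cyc j(1)] by blast
    then have "mg_connected W (I - {es ! j}) ends"
      by (rule mg_connected_Diff_bypassed[OF less.prems(2)])
    moreover have "finite (I - {es ! j})" "F0 \<subseteq> I - {es ! j}"
      using less.prems(1,3) j(2) by auto
    ultimately obtain J where "F0 \<subseteq> J" "mg_spanning_tree W (I - {es ! j}) ends J"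
      using less.hyps[OF smaller _ _ _ less.prems(4)] by blast
    then show ?thesis unfolding mg_spanning_tree_def by blast
  qed
qed

(* With c = component V (E - S), the multigraph H of the paper has vertex set c ` V, edge set
   crossing_edges c S and endpoint map image c. *)
definition crossing_edges :: "('v \<Rightarrow> 'c) \<Rightarrow> 'v set set \<Rightarrow> 'v set set" where
  "crossing_edges c S = {f \<in> S. \<forall>x\<in>f. \<forall>y\<in>f. x \<noteq> y \<longrightarrow> c x \<noteq> c y}"

lemma crossing_edges_subset: "crossing_edges c S \<subseteq> S"
  by (auto simp: crossing_edges_def)

lemma component_eq_if_rtranclp:
  assumes "(mg_adj R id)\<^sup>*\<^sup>* x y"
  shows "component V R x = component V R y"
  using assms mg_adj_rtranclp_sym[OF assms] unfolding component_def by (blast intro: rtranclp_trans)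

lemma rtranclp_if_component_eq:
  assumes "y \<in> V" "component V R x = component V R y"
  shows "(mg_adj R id)\<^sup>*\<^sup>* x y"
proof -
  have "y \<in> component V R y" using assms(1) by (simp add: component_def)
  then have "y \<in> component V R x" using assms(2) by simp
  then show ?thesis by (simp add: component_def)
qed

lemma contract_rtranclp_mg_adj:
  fixes V :: "'v set" and E S :: "'v set set"
  defines "c \<equiv> component V (E - S)"
  assumes "K \<subseteq> E" "(mg_adj K id)\<^sup>*\<^sup>* x y"
  shows "(mg_adj (K \<inter> crossing_edges c S) ((`) c))\<^sup>*\<^sup>* (c x) (c y)"
  using assms(3)
proof (induction rule: rtranclp_induct)
  case base
  then show ?case by simp
next
  case (step y z)
  obtain f where f: "f \<in> K" "f = {y, z}" using step.hyps(2) by (auto simp: mg_adj_def)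
  show ?case
  proof (cases "f \<in> crossing_edges c S")
    case True
    moreover have "c ` f = {c y, c z}" using f(2) by simp
    ultimately have "mg_adj (K \<inter> crossing_edges c S) ((`) c) (c y) (c z)"
      using f(1) unfolding mg_adj_def by blast
    then show ?thesis by (rule rtranclp.rtrancl_into_rtrancl[OF step.IH])
  next
    case not_crossing: False
    have "c y = c z"
    proof (cases "f \<in> S")
      case True
      then obtain p q where "p \<in> f" "q \<in> f" "p \<noteq> q" "c p = c q"
        using not_crossing unfolding crossing_edges_def by blast
      then show ?thesis using f(2) by auto
    next
      case False
      then have "mg_adj (E - S) id y z" using f assms(2) unfolding mg_adj_def by auto
      then show ?thesis unfolding c_def by (intro component_eq_if_rtranclp) simp
    qed
    then show ?thesis using step.IH by simp
  qed
qed

lemma lift_rtranclp_mg_adj: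
  fixes V :: "'v set" and R :: "'v set set"
  defines "c \<equiv> component V R"
  assumes graph: "\<forall>f\<in>E. f \<subseteq> V \<and> card f = 2" and "T \<subseteq> E"
    and "(mg_adj T ((`) c))\<^sup>*\<^sup>* C D" "x \<in> V" "c x = C" "y \<in> V" "c y = D"
  shows "(mg_adj (T \<union> R) id)\<^sup>*\<^sup>* x y"
  using assms(4,7,8)
proof (induction arbitrary: y rule: rtranclp_induct)
  case base
  then have "(mg_adj R id)\<^sup>*\<^sup>* x y"
    using assms(6) unfolding c_def by (metis rtranclp_if_component_eq)
  then show ?case by (rule mg_adj_rtranclp_mono[rotated]) blast
next
  case (step D' D)
  obtain f where f: "f \<in> T" "c ` f = {D', D}" using step.hyps(2) unfolding mg_adj_def by blast
  obtain a b where ab: "f = {a, b}" "a \<in> V" "b \<in> V"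
    using graph f(1) \<open>T \<subseteq> E\<close> by (metis card_2_iff insert_subset subsetD)
  then have "{c a, c b} = {D', D}" using f(2) by simp
  then have "c a = D' \<and> c b = D \<or> c a = D \<and> c b = D'" by (simp only: doubleton_eq_iff)
  moreover have "f = {b, a}" using ab(1) by (simp only: insert_commute)
  ultimately obtain a' b' where ab': "f = {a', b'}" "a' \<in> V" "b' \<in> V" "c a' = D'" "c b' = D"
    using ab by blast
  have "(mg_adj (T \<union> R) id)\<^sup>*\<^sup>* x a'" using step.IH ab' by blast
  moreover have "mg_adj (T \<union> R) id a' b'" using f(1) ab' unfolding mg_adj_def by auto
  moreover have "(mg_adj R id)\<^sup>*\<^sup>* b' y"
    using step.prems ab' unfolding c_def by (metis rtranclp_if_component_eq)
  then have "(mg_adj (T \<union> R) id)\<^sup>*\<^sup>* b' y" by (rule mg_adj_rtranclp_mono[rotated]) blast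
  ultimately show ?case by (meson rtranclp.rtrancl_into_rtrancl rtranclp_trans)
qed

lemma mg_acyclic_Un_contracted:
  fixes V :: "'v set" and E S :: "'v set set"
  defines "c \<equiv> component V (E - S)"
  assumes "S \<subseteq> E" "T \<subseteq> crossing_edges c S" "mg_acyclic T ((`) c)"
    and "D \<subseteq> E - S" "mg_acyclic D id"
  shows "mg_acyclic (T \<union> D) id"
  unfolding mg_acyclic_def
proof
  assume "\<exists>vs es. mg_is_cycle (T \<union> D) id vs es"
  then obtain vs es where cyc: "mg_is_cycle (T \<union> D) id vs es" by blast
  show False
  proof (cases "set es \<subseteq> D")
    case True
    then show False
      using mg_is_cycle_edges_subset[OF cyc] assms(6) unfolding mg_acyclic_def by blast
  next
    case False
    then obtain j where j: "j < length es" "es ! j \<notin> D" by (metis in_set_conv_nth subsetI)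
    define f where "f = es ! j"
    have "set es \<subseteq> T \<union> D" using cyc unfolding mg_is_cycle_def by (elim conjE) assumption
    then have fT: "f \<in> T" using j nth_mem[OF j(1)] unfolding f_def by blast
    obtain a b where ab: "a \<noteq> b" "f = {a, b}" and path: "(mg_adj (T \<union> D - {f}) id)\<^sup>*\<^sup>* a b"
      using mg_is_cycle_bypass[OF cyc j(1)] unfolding f_def by auto
    have "T \<union> D - {f} \<subseteq> E" using assms(2,3,5) crossing_edges_subset by blast
    then have "(mg_adj ((T \<union> D - {f}) \<inter> crossing_edges c S) ((`) c))\<^sup>*\<^sup>* (c a) (c b)"
      using path unfolding c_def by (rule contract_rtranclp_mg_adj)
    moreover have "(T \<union> D - {f}) \<inter> crossing_edges c S = T - {f}"
      using assms(3,5) crossing_edges_subset by blast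
    moreover have "c a \<noteq> c b" using fT assms(3) ab unfolding crossing_edges_def by blast
    moreover have "c ` f = {c a, c b}" using ab(2) by simp
    ultimately have "\<not> mg_acyclic T ((`) c)" using fT by (intro not_mg_acyclic_if_bypass) simp_all
    then show False using assms(4) by contradiction
  qed
qed

lemma dep_set_mono: "X \<subseteq> Y \<Longrightarrow> dep_set A X \<subseteq> dep_set A Y"
  by (auto simp: dep_set_def)

lemma lu_satisfies_card_dep_iff:
  assumes "\<forall>x\<in>F. l x = card (dep A x) \<and> u x = card (dep A x)" "\<forall>x\<in>F. finite (dep A x)"
  shows "lu_satisfies l u A F \<longleftrightarrow> dep_set A F \<subseteq> F"
proof -
  have "card (dep A x) \<le> card (dep A x \<inter> F) \<longleftrightarrow> dep A x \<subseteq> F" if "finite (dep A x)" for x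
    using that card_seteq[OF that, of "dep A x \<inter> F"] by (auto simp: Int_absorb2)
  moreover have "card (dep A x \<inter> F) \<le> card (dep A x)" if "finite (dep A x)" for x
    using that by (simp add: card_mono)
  ultimately show ?thesis using assms unfolding lu_satisfies_def dep_set_def by auto
qed

lemma dep_closed_spanning_tree_if_contracted_tree:
  fixes V :: "'v set" and E S :: "'v set set"
  defines "c \<equiv> component V (E - S)"
  assumes "finite E" and graph: "\<forall>f\<in>E. f \<subseteq> V \<and> card f = 2" and "S \<subseteq> E"
    and arcs: "A \<subseteq> (E - S) \<times> S"
    and T: "mg_spanning_tree (c ` V) (crossing_edges c S) ((`) c) T"
    and dep_acyclic: "mg_acyclic (dep_set A T) id"
  shows "\<exists>F. mg_spanning_tree V E id F \<and> dep_set A F \<subseteq> F"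
proof -
  have T_crossing: "T \<subseteq> crossing_edges c S" and T_conn: "mg_connected (c ` V) T ((`) c)"
    and T_acyclic: "mg_acyclic T ((`) c)"
    using T unfolding mg_spanning_tree_def by auto
  have TE: "T \<subseteq> E" using T_crossing crossing_edges_subset \<open>S \<subseteq> E\<close> by blast
  have dep_T: "dep_set A T \<subseteq> E - S" using arcs by (auto simp: dep_set_def dep_def)
  have F0_acyclic: "mg_acyclic (T \<union> dep_set A T) id"
    using \<open>S \<subseteq> E\<close> T_crossing T_acyclic dep_T dep_acyclic unfolding c_def
    by (rule mg_acyclic_Un_contracted)
  have conn: "mg_connected V (T \<union> (E - S)) id"
    unfolding mg_connected_def
  proof (intro ballI)
    fix x y assume "x \<in> V" "y \<in> V"
    then have "(mg_adj T ((`) c))\<^sup>*\<^sup>* (c x) (c y)" using T_conn unfolding mg_connected_def by blast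
    then show "(mg_adj (T \<union> (E - S)) id)\<^sup>*\<^sup>* x y"
      unfolding c_def
      by (rule lift_rtranclp_mg_adj[OF graph TE _ \<open>x \<in> V\<close> refl \<open>y \<in> V\<close> refl])
  qed
  have "finite (T \<union> (E - S))" using \<open>finite E\<close> TE by (simp add: finite_subset)
  moreover have "T \<union> dep_set A T \<subseteq> T \<union> (E - S)" using dep_T by blast
  ultimately obtain F where F0: "T \<union> dep_set A T \<subseteq> F"
    and F: "mg_spanning_tree V (T \<union> (E - S)) id F"
    using mg_acyclic_extends_to_spanning_tree[OF _ conn _ F0_acyclic] by blast
  have "dep A x \<subseteq> F" if "x \<in> F" for x
  proof (cases "x \<in> S")
    case True
    then have "x \<in> T" using that F unfolding mg_spanning_tree_def by blast
    then show ?thesis using F0 by (auto simp: dep_set_def)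
  next
    case False
    then show ?thesis using arcs by (auto simp: dep_def)
  qed
  then have "dep_set A F \<subseteq> F" by (auto simp: dep_set_def)
  moreover have "mg_spanning_tree V E id F" using F TE unfolding mg_spanning_tree_def by blast
  ultimately show ?thesis by blast
qed

lemma contracted_tree_if_dep_closed_spanning_tree:
  fixes V :: "'v set" and E S :: "'v set set"
  defines "c \<equiv> component V (E - S)"
  assumes "finite E" and F: "mg_spanning_tree V E id F" and closed: "dep_set A F \<subseteq> F"
  shows "\<exists>J\<subseteq>F \<inter> crossing_edges c S.
           mg_spanning_tree (c ` V) (crossing_edges c S) ((`) c) J \<and> mg_acyclic (dep_set A J) id"
proof -
  have FE: "F \<subseteq> E" and F_conn: "mg_connected V F id" and F_acyclic: "mg_acyclic F id"
    using F unfolding mg_spanning_tree_def by auto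
  have "mg_connected (c ` V) (F \<inter> crossing_edges c S) ((`) c)"
    using FE F_conn unfolding mg_connected_def c_def by (blast intro: contract_rtranclp_mg_adj)
  moreover have "finite (F \<inter> crossing_edges c S)" using \<open>finite E\<close> FE by (simp add: finite_subset)
  ultimately obtain J where J: "mg_spanning_tree (c ` V) (F \<inter> crossing_edges c S) ((`) c) J"
    using mg_acyclic_extends_to_spanning_tree[OF _ _ empty_subsetI mg_acyclic_empty] by blast
  then have "J \<subseteq> F" unfolding mg_spanning_tree_def by blast
  then have "mg_acyclic (dep_set A J) id"
    using dep_set_mono[of J F] closed F_acyclic by (blast intro: mg_acyclic_subset)
  then show ?thesis using J unfolding mg_spanning_tree_def by blast
qed

lemma shifted_arcs_subset:
  fixes e :: "nat \<Rightarrow> 'a" and m t :: nat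
  defines "S \<equiv> {e i | i. i \<in> {t+1..2*t}}"
  assumes "bij_betw e {1..m} E" "2 * t \<le> m"
  shows "S \<subseteq> E" and "{(e i, e (i + t)) | i. i \<in> {1..t}} \<subseteq> (E - S) \<times> S"
proof -
  have E: "E = e ` {1..m}" and inj: "inj_on e {1..m}" using assms(2) by (auto simp: bij_betw_def)
  have S: "S = e ` {t+1..2*t}" unfolding S_def by blast
  show "S \<subseteq> E" using assms(3) by (auto simp: E S)
  have "e i \<notin> S" if "i \<in> {1..t}" for i
    unfolding S using that assms(3) by (subst inj_on_image_mem_iff[OF inj]) auto
  then show "{(e i, e (i + t)) | i. i \<in> {1..t}} \<subseteq> (E - S) \<times> S"
    using assms(3) by (auto simp: E S)
qed

theorem lemma2:
  fixes V :: "'v set" and E :: "'v set set" and e :: "nat \<Rightarrow> 'v set"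
    and m t :: nat and A :: "('v set \<times> 'v set) set" and l u :: "'v set \<Rightarrow> nat"
    and S :: "'v set set"
  assumes finV: "finite V"
    and graph: "\<forall>x\<in>E. x \<subseteq> V \<and> card x = 2"
    and enum: "bij_betw e {1..m} E"
    and t: "t \<le> m div 2"
    and A_def: "A = {(e i, e (i + t)) | i. i \<in> {1..t}}"
    and lu: "\<forall>x\<in>E. l x = card (dep A x) \<and> u x = card (dep A x) \<and> card (dep A x) \<in> {0, 1}"
    and S_def: "S = {e i | i. i \<in> {t+1..2*t}}"
  defines "cmp \<equiv> component V (E - S)"
  defines "SH \<equiv> {f\<in>S. \<forall>x\<in>f. \<forall>y\<in>f. x \<noteq> y \<longrightarrow> cmp x \<noteq> cmp y}"
  defines "HS S' \<equiv> mg_spanning_tree (cmp ` V) SH (\<lambda>f. cmp ` f) (S' \<inter> SH)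
                     \<and> mg_acyclic (dep_set A S') id"
  shows "((\<exists>S'\<subseteq>S. HS S') \<longrightarrow>
           (\<exists>F. mg_spanning_tree V E id F \<and> lu_satisfies l u A F))
       \<and> (\<forall>F. mg_spanning_tree V E id F \<and> lu_satisfies l u A F \<longrightarrow>
           (\<exists>S'\<subseteq>F \<inter> S. HS S'))"
proof -
  have finE: "finite E" using finV graph by (meson Pow_iff finite_Pow_iff finite_subset subsetI)
  have SE: "S \<subseteq> E" and arcs: "A \<subseteq> (E - S) \<times> S"
    using shifted_arcs_subset[OF enum] t unfolding A_def S_def by auto
  have sat_iff: "lu_satisfies l u A F \<longleftrightarrow> dep_set A F \<subseteq> F" if "F \<subseteq> E" for F
    using lu that arcs finE
    by (intro lu_satisfies_card_dep_iff) (auto simp: dep_def intro: finite_subset[of _ E])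
  have SH: "SH = crossing_edges cmp S" by (simp add: SH_def crossing_edges_def)
  show ?thesis
  proof (intro conjI allI impI)
    assume "\<exists>S'\<subseteq>S. HS S'"
    then obtain S' where "mg_spanning_tree (cmp ` V) SH ((`) cmp) (S' \<inter> SH)"
      "mg_acyclic (dep_set A (S' \<inter> SH)) id"
      unfolding HS_def by (meson dep_set_mono inf_le1 mg_acyclic_subset)
    then obtain F where "mg_spanning_tree V E id F" "dep_set A F \<subseteq> F"
      using dep_closed_spanning_tree_if_contracted_tree[OF finE graph SE arcs, folded cmp_def SH]
      by blast
    then show "\<exists>F. mg_spanning_tree V E id F \<and> lu_satisfies l u A F"
      using sat_iff unfolding mg_spanning_tree_def by blast
  next
    fix F assume F: "mg_spanning_tree V E id F \<and> lu_satisfies l u A F"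
    then have closed: "dep_set A F \<subseteq> F" using sat_iff unfolding mg_spanning_tree_def by blast
    obtain J where J: "J \<subseteq> F \<inter> SH" "mg_spanning_tree (cmp ` V) SH ((`) cmp) J"
      "mg_acyclic (dep_set A J) id"
      using contracted_tree_if_dep_closed_spanning_tree[where S = S, OF finE conjunct1[OF F] closed,
          folded cmp_def SH]
      by blast
    then have "J \<inter> SH = J" by blast
    then have "HS J" using J(2,3) unfolding HS_def by simp
    moreover have "J \<subseteq> F \<inter> S" using J(1) SH crossing_edges_subset by blast
    ultimately show "\<exists>S'\<subseteq>F \<inter> S. HS S'" by blast
  qed
qed

end
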